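(* Let $h:\{0,1,2,3\}^*\to\{0,1,2,3\}^*$ be the $11$-uniform morphism defined by $h(0)=01312021310$, $h(1)=12023132021$, $h(2)=23130203132$, $h(3)=30201310203$. Then every letter image $h(a)$ is a palindrome, and the infinite fixed point $h^\omega(0)=\lim_{n\to\infty}h^n(0)$ contains no factor that is a $(p/q)$-power with $p/q>\tfrac32$. Consequently, for every $n\ge1$, $h^n(0)$ is a palindrome of length $11^n$ with critical exponent $\tfrac32$.
   Context: A word $x=x[1..n]$ has period $q$ if $x[i]=x[i+q]$ for $1\le i\le n-q$. For integers $p>q\ge1$, $x$ is a $(p/q)$-power if it has length $p$ and period $q$. The critical exponent of a word is the maximum, over its nonempty factors $w'$, of the largest $p/q$ such that $w'$ is a $(p/q)$-power. Since $h(0)$ begins with $0$, the words $h^n(0)$ are prefixes of one another and define the infinite fixed point $h^\omega(0)$. *)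

theory Defs
  imports Complex_Main "HOL-Library.Sublist"
begin

fun h_letter :: "nat \<Rightarrow> nat list" where
  "h_letter a =
     (if a = 0 then [0,1,3,1,2,0,2,1,3,1,0]
      else if a = 1 then [1,2,0,2,3,1,3,2,0,2,1]
      else if a = 2 then [2,3,1,3,0,2,0,3,1,3,2]
      else if a = 3 then [3,0,2,0,1,3,1,0,2,0,3]
      else [])"

definition h :: "nat list \<Rightarrow> nat list" where
  "h w = concat (map h_letter w)"

definition hpow :: "nat \<Rightarrow> nat list" where
  "hpow n = (h ^^ n) [0]"

text \<open>The infinite fixed point h^omega(0): position i is read off from the prefix
  h^(i+1)(0), which has length 11^(i+1) > i (the words h^n(0) are prefixes of one another).\<close>
definition h_omega :: "nat \<Rightarrow> nat" where
  "h_omega i = hpow (Suc i) ! i"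

definition has_period :: "'a list \<Rightarrow> nat \<Rightarrow> bool" where
  "has_period x q \<longleftrightarrow> (\<forall>j. j + q < length x \<longrightarrow> x ! j = x ! (j + q))"

definition is_power :: "'a list \<Rightarrow> nat \<Rightarrow> nat \<Rightarrow> bool" where
  "is_power x p q \<longleftrightarrow> p > q \<and> q \<ge> 1 \<and> length x = p \<and> has_period x q"

definition crit_exp :: "'a list \<Rightarrow> real" where
  "crit_exp w = Max {real p / real q | v p q. sublist v w \<and> v \<noteq> [] \<and> is_power v p q}"

end

theory Submission
  imports Defs
begin

text \<open>Every image h(a) is h(0) translated letterwise by a modulo 4, so the letter of
  h^\<omega>(0) at position n is the sum modulo 4 of the letters of h(0) indexed by the
  base-11 digits of n. A factor of period q and length q + m amounts to m coincidences
  x[i+t] = x[i+t+q], and 2m \<le> q follows by strong induction on q. If 11 divides q, the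
  coincidences cancel the last digit and yield a repetition of period q/11 covering at least
  m/11 positions of the preimage. Otherwise, the difference of consecutive letters inside a
  block depends only on the position in the block, and a shift by q mod 11 changes one of these
  differences within five steps, so m < 6; the remaining periods q \<le> 9 are excluded by
  inspecting h(x)h(y)h(z) for all x \<noteq> y \<noteq> z. The palindromes come from rev (h w) = h (rev w).\<close>

lemma h_letter_shift:
  assumes "a < 4"
  shows "h_letter a = map (\<lambda>k. (a + h_letter 0 ! k) mod 4) [0..<11]"
proof -
  consider "a = 0" | "a = 1" | "a = 2" | "a = 3"
    using assms by linarith
  then show ?thesis
    by cases (simp_all add: upt_rec)
qed

lemma rev_h_letter: "rev (h_letter a) = h_letter a"
  by simp

lemma h_letter_0: "h_letter 0 = [0, 1, 3, 1, 2, 0, 2, 1, 3, 1, 0]"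
  by simp

declare h_letter.simps [simp del]

fun hfix :: "nat \<Rightarrow> nat" where
  "hfix n = (if n = 0 then 0 else (hfix (n div 11) + h_letter 0 ! (n mod 11)) mod 4)"
declare hfix.simps [simp del]

lemma hfix_less: "hfix n < 4"
  by (subst hfix.simps) simp

lemma hfix_0 [simp]: "hfix 0 = 0"
  by (subst hfix.simps) simp

lemma hfix_digit: "k < 11 \<Longrightarrow> hfix (11 * b + k) = (hfix b + h_letter 0 ! k) mod 4"
  using hfix.simps[of "11 * b + k"] by (cases "b = 0 \<and> k = 0") (auto simp: h_letter_0)

lemma length_h_letter: "a < 4 \<Longrightarrow> length (h_letter a) = 11"
  using h_letter_shift[of a] by simp

lemma hfix_block: "k < 11 \<Longrightarrow> hfix (11 * b + k) = h_letter (hfix b) ! k"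
  by (simp add: hfix_digit h_letter_shift[OF hfix_less])

lemma h_map_hfix: "h (map hfix [0..<N]) = map hfix [0..<11 * N]"
proof (induction N)
  case 0
  show ?case by (simp add: h_def)
next
  case (Suc N)
  have block: "map hfix [11 * N..<11 * N + 11] = h_letter (hfix N)"
    by (rule nth_equalityI) (simp_all add: length_h_letter hfix_less hfix_block)
  have "[0..<11 * Suc N] = [0..<11 * N] @ [11 * N..<11 * N + 11]"
    unfolding mult_Suc_right add.commute[of 11] by (rule upt_add_eq_append) simp
  then show ?case
    using Suc.IH block by (simp add: h_def)
qed

lemma hpow_eq_map_hfix: "hpow n = map hfix [0..<11 ^ n]"
  by (induction n) (simp_all add: hpow_def h_map_hfix)

lemma length_hpow: "length (hpow n) = 11 ^ n"
  by (simp add: hpow_eq_map_hfix)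

lemma h_omega_eq_hfix: "h_omega = hfix"
proof
  fix i
  have "i < 11 ^ Suc i"
    by (induction i) auto
  then show "h_omega i = hfix i"
    by (simp add: h_omega_def hpow_eq_map_hfix)
qed

lemma rev_h: "rev (h w) = h (rev w)"
  by (simp add: h_def rev_concat rev_map comp_def rev_h_letter)

lemma rev_hpow: "rev (hpow n) = hpow n"
  by (induction n) (simp_all add: hpow_def rev_h)

lemma hfix_block_cancel:
  assumes "k < 11" and "hfix (11 * b + k) = hfix (11 * b' + k)"
  shows "hfix b = hfix b'"
proof -
  have "(hfix b + h_letter 0 ! k) mod 4 = (hfix b' + h_letter 0 ! k) mod 4"
    using assms by (simp add: hfix_digit)
  then have "hfix b mod 4 = hfix b' mod 4"
    by (simp add: nat_mod_eq_iff)
  then show ?thesis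
    using hfix_less by simp
qed

definition block_jump :: "nat \<Rightarrow> int" where
  "block_jump k = (int (h_letter 0 ! Suc k) - int (h_letter 0 ! k)) mod 4"

lemma hfix_jump:
  assumes "j mod 11 < 10"
  shows "(int (hfix (Suc j)) - int (hfix j)) mod 4 = block_jump (j mod 11)"
proof -
  define b k where "b = j div 11" and "k = j mod 11"
  have "hfix j = (hfix b + h_letter 0 ! k) mod 4"
    using hfix_digit[of k b] by (simp add: b_def k_def)
  moreover have "hfix (Suc j) = (hfix b + h_letter 0 ! Suc k) mod 4"
    using hfix_digit[of "Suc k" b] assms by (simp add: b_def k_def)
  ultimately have "(int (hfix (Suc j)) - int (hfix j)) mod 4
      = ((int (hfix b) + int (h_letter 0 ! Suc k)) mod 4 - (int (hfix b) + int (h_letter 0 ! k)) mod 4) mod 4"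
    by (simp only: of_nat_mod of_nat_add of_nat_numeral)
  also have "\<dots> = block_jump k"
    by (simp only: block_jump_def mod_diff_eq add_diff_cancel_left)
  finally show ?thesis
    by (simp only: k_def)
qed

lemma block_jump_nonzero: "k < 10 \<Longrightarrow> block_jump k \<noteq> 0"
proof -
  have "\<forall>k\<in>set [0..<10]. block_jump k \<noteq> 0"
    by code_simp
  then show "k < 10 \<Longrightarrow> block_jump k \<noteq> 0"
    by simp
qed

lemma hfix_Suc_neq: "hfix (Suc a) \<noteq> hfix a"
proof (induction a rule: less_induct)
  case (less a)
  define b where "b = a div 11"
  show ?case
  proof (cases "a mod 11 < 10")
    case True
    then show ?thesis
      using hfix_jump block_jump_nonzero by fastforce
  next
    case False
    then have "a mod 11 = 10"
      using mod_less_divisor[of 11 a] by linarith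
    then have a: "a = 11 * b + 10" and Suc_a: "Suc a = 11 * Suc b + 0"
      using div_mult_mod_eq[of a 11] by (simp_all add: b_def)
    then have "hfix a = hfix b" and "hfix (Suc a) = hfix (Suc b)"
      using hfix_less hfix_digit[of 10 b] hfix_digit[of 0 "Suc b"] by (simp_all add: h_letter_0)
    moreover have "hfix (Suc b) \<noteq> hfix b"
      using less.IH a by simp
    ultimately show ?thesis
      by simp
  qed
qed

lemma block_jump_mismatch:
  assumes "r < 11" and "0 < s" and "s < 11"
  shows "\<exists>t<5. (r + t) mod 11 \<noteq> 10 \<and> (r + t + s) mod 11 \<noteq> 10
           \<and> block_jump ((r + t) mod 11) \<noteq> block_jump ((r + t + s) mod 11)"
proof -
  have "\<forall>r\<in>set [0..<11]. \<forall>s\<in>set [1..<11]. \<exists>t\<in>set [0..<5]. (r + t) mod 11 \<noteq> 10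
          \<and> (r + t + s) mod 11 \<noteq> 10 \<and> block_jump ((r + t) mod 11) \<noteq> block_jump ((r + t + s) mod 11)"
    by code_simp
  then show ?thesis
    using assms by fastforce
qed

lemma hfix_overlap_lt_6:
  assumes "\<not> 11 dvd q" and rep: "\<forall>t<m. hfix (i + t) = hfix (i + t + q)"
  shows "m < 6"
proof (rule ccontr)
  assume "\<not> m < 6"
  have "i mod 11 < 11" "0 < q mod 11" "q mod 11 < 11"
    using assms(1) by (simp_all add: dvd_eq_mod_eq_0)
  then obtain t where t: "t < 5" "(i mod 11 + t) mod 11 \<noteq> 10" "(i mod 11 + t + q mod 11) mod 11 \<noteq> 10"
      "block_jump ((i mod 11 + t) mod 11) \<noteq> block_jump ((i mod 11 + t + q mod 11) mod 11)"
    using block_jump_mismatch by blast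
  define j where "j = i + t"
  have "(i mod 11 + t) mod 11 = j mod 11"
    by (simp add: j_def mod_add_left_eq)
  have "(i mod 11 + t + q mod 11) mod 11 = (i mod 11 + t + q) mod 11"
    by (rule mod_add_right_eq)
  also have "\<dots> = (j + q) mod 11"
    by (simp add: j_def mod_add_left_eq add.assoc)
  finally have "(i mod 11 + t + q mod 11) mod 11 = (j + q) mod 11" .
  with t \<open>(i mod 11 + t) mod 11 = j mod 11\<close> have "j mod 11 \<noteq> 10" "(j + q) mod 11 \<noteq> 10"
      and jumps: "block_jump (j mod 11) \<noteq> block_jump ((j + q) mod 11)"
    by simp_all
  moreover have "j mod 11 < 11" "(j + q) mod 11 < 11"
    by simp_all
  ultimately have inner: "j mod 11 < 10" "(j + q) mod 11 < 10"
    by linarith+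
  have "hfix j = hfix (j + q)" and "hfix (Suc j) = hfix (Suc (j + q))"
    using rep[rule_format, of t] rep[rule_format, of "Suc t"] \<open>\<not> m < 6\<close> t(1)
    by (simp_all add: j_def)
  then have "block_jump (j mod 11) = block_jump ((j + q) mod 11)"
    using hfix_jump[OF inner(1)] hfix_jump[OF inner(2)] by simp
  with jumps show False ..
qed

lemma hfix_three_blocks:
  assumes "n < 33"
  shows "hfix (11 * a + n) = (h_letter (hfix a) @ h_letter (hfix (Suc a)) @ h_letter (hfix (Suc (Suc a)))) ! n"
proof -
  have "11 * a + n = 11 * (a + n div 11) + n mod 11"
    by simp
  then have "hfix (11 * a + n) = h_letter (hfix (a + n div 11)) ! (n mod 11)"
    by (metis hfix_block mod_less_divisor zero_less_numeral)
  moreover consider "n < 11" | "11 \<le> n" "n < 22" | "22 \<le> n"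
    by linarith
  ultimately show ?thesis
    using assms by cases (simp_all add: nth_append length_h_letter hfix_less le_div_geq le_mod_geq)
qed

lemma h_triple_short_period_mismatch:
  assumes "x < 4" "y < 4" "z < 4" "x \<noteq> y" "y \<noteq> z" "r < 11" "0 < q" "q \<le> 9"
  shows "\<exists>t \<le> q div 2. (h_letter x @ h_letter y @ h_letter z) ! (r + t)
                     \<noteq> (h_letter x @ h_letter y @ h_letter z) ! (r + t + q)"
proof -
  have "\<forall>x\<in>set [0..<4]. \<forall>y\<in>set [0..<4]. \<forall>z\<in>set [0..<4]. x \<noteq> y \<longrightarrow> y \<noteq> z \<longrightarrow>
    (\<forall>r\<in>set [0..<11]. \<forall>q\<in>set [1..<10]. \<exists>t\<in>set [0..<q div 2 + 1].
     (h_letter x @ h_letter y @ h_letter z) ! (r + t) \<noteq> (h_letter x @ h_letter y @ h_letter z) ! (r + t + q))"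
    by code_simp
  from this[rule_format, of x y z r q] assms show ?thesis
    by (fastforce simp: less_Suc_eq_le)
qed

lemma hfix_overlap_small_period:
  assumes "0 < q" "q \<le> 9" and rep: "\<forall>t<m. hfix (i + t) = hfix (i + t + q)"
  shows "2 * m \<le> q"
proof (rule ccontr)
  assume "\<not> 2 * m \<le> q"
  define a r where "a = i div 11" and "r = i mod 11"
  define w where "w = h_letter (hfix a) @ h_letter (hfix (Suc a)) @ h_letter (hfix (Suc (Suc a)))"
  have i: "i = 11 * a + r" and "r < 11"
    by (simp_all add: a_def r_def)
  have "hfix a \<noteq> hfix (Suc a)" "hfix (Suc a) \<noteq> hfix (Suc (Suc a))"
    using hfix_Suc_neq[of a] hfix_Suc_neq[of "Suc a"] by auto
  then obtain t where t: "t \<le> q div 2" "w ! (r + t) \<noteq> w ! (r + t + q)"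
    using h_triple_short_period_mismatch[OF hfix_less hfix_less hfix_less _ _ \<open>r < 11\<close> assms(1,2)]
    unfolding w_def by blast
  have "r + t < 33" "r + t + q < 33"
    using t(1) \<open>r < 11\<close> assms(2) by linarith+
  then have "hfix (i + t) = w ! (r + t)" and "hfix (i + t + q) = w ! (r + t + q)"
    unfolding i w_def add.assoc by (simp_all only: hfix_three_blocks)
  moreover have "t < m"
    using t(1) \<open>\<not> 2 * m \<le> q\<close> by linarith
  ultimately show False
    using rep t(2) by auto
qed

lemma hfix_overlap_desubstitute:
  assumes "0 < m" and rep: "\<forall>t<m. hfix (i + t) = hfix (i + t + 11 * q)"
  shows "\<exists>i' m'. m \<le> 11 * m' \<and> (\<forall>t<m'. hfix (i' + t) = hfix (i' + t + q))"
proof (intro exI conjI allI impI)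
  define m' where "m' = (i + m - 1) div 11 + 1 - i div 11"
  show "m \<le> 11 * m'"
    using assms(1) unfolding m'_def by linarith
  fix t
  assume "t < m'"
  define b where "b = i div 11 + t"
  \<comment> \<open>a position of the repetition lying in block b\<close>
  define j where "j = max i (11 * b)"
  have "b \<le> (i + m - 1) div 11"
    using \<open>t < m'\<close> unfolding b_def m'_def by linarith
  then have "11 * b \<le> i + m - 1"
    using div_times_less_eq_dividend[of "i + m - 1" 11] by linarith
  then have "i \<le> j" "j < i + m"
    using assms(1) unfolding j_def by auto
  have "j div 11 = b"
  proof (cases "11 * b \<le> i")
    case True
    then have "b = i div 11"
      using div_mult_mod_eq[of i 11] unfolding b_def by simp
    then show ?thesis
      using True by (simp add: j_def)
  qed (simp add: j_def)
  define k where "k = j mod 11"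
  have j: "j = 11 * b + k"
    using \<open>j div 11 = b\<close> div_mult_mod_eq[of j 11] by (simp add: k_def)
  have "hfix (11 * b + k) = hfix (11 * (b + q) + k)"
    using rep[rule_format, of "j - i"] \<open>i \<le> j\<close> \<open>j < i + m\<close> unfolding j
    by (simp add: algebra_simps)
  moreover have "k < 11"
    by (simp add: k_def)
  ultimately show "hfix (i div 11 + t) = hfix (i div 11 + t + q)"
    unfolding b_def by (rule hfix_block_cancel[rotated])
qed

lemma hfix_overlap_bound:
  assumes "0 < q" and "\<forall>t<m. hfix (i + t) = hfix (i + t + q)"
  shows "2 * m \<le> q"
  using assms
proof (induction q arbitrary: i m rule: less_induct)
  case (less q)
  show ?case
  proof (cases "11 dvd q")
    case True
    then obtain q' where q: "q = 11 * q'" ..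
    show ?thesis
    proof (cases "m = 0")
      case False
      then obtain i' m' where "m \<le> 11 * m'" "\<forall>t<m'. hfix (i' + t) = hfix (i' + t + q')"
        using hfix_overlap_desubstitute less.prems(2) q by blast
      moreover have "2 * m' \<le> q'"
        using less.IH less.prems(1) q calculation(2) by auto
      ultimately show ?thesis
        using q by linarith
    qed simp
  next
    case False
    then have "m < 6"
      using hfix_overlap_lt_6 less.prems(2) by blast
    show ?thesis
    proof (cases "2 * m \<le> q")
      case False
      with \<open>m < 6\<close> have "q \<le> 9"
        by linarith
      then show ?thesis
        using less.prems hfix_overlap_small_period by blast
    qed
  qed
qed

lemma is_power_map_upt:
  "is_power (map f [i..<i + p]) p q \<longleftrightarrow> q < p \<and> 0 < q \<and> (\<forall>t<p - q. f (i + t) = f (i + t + q))"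
  by (auto simp: is_power_def has_period_def add.assoc)

lemma hfix_power_bound:
  assumes "is_power (map hfix [i..<i + p]) p q"
  shows "real p / real q \<le> 3 / 2"
proof -
  have "q < p" "0 < q" "2 * (p - q) \<le> q"
    using assms hfix_overlap_bound by (auto simp: is_power_map_upt)
  then show ?thesis
    by (simp add: field_simps)
qed

lemma sublist_map_upt:
  assumes "sublist v (map f [0..<N])"
  shows "\<exists>i. v = map f [i..<i + length v]"
proof -
  obtain ps ss where e: "map f [0..<N] = ps @ v @ ss"
    using assms by (auto simp: sublist_def)
  then have "v = take (length v) (drop (length ps) (map f [0..<N]))"
    by simp
  also have "\<dots> = map f [length ps..<length ps + length v]"
    using arg_cong[OF e, of length] by (simp add: take_map drop_map)
  finally show ?thesis ..
qed

lemma crit_exp_hpow: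
  assumes "1 \<le> n"
  shows "crit_exp (hpow n) = 3 / 2"
proof -
  define N where "N = (11::nat) ^ n"
  define S where "S = {real p / real q | v p q. sublist v (hpow n) \<and> v \<noteq> [] \<and> is_power v p q}"
  have hpow: "hpow n = map hfix [0..<N]"
    by (simp add: N_def hpow_eq_map_hfix)
  have bound: "real p / real q \<le> 3 / 2 \<and> p \<le> N \<and> q \<le> N"
    if "sublist v (hpow n)" and "is_power v p q" for v p q
  proof -
    have "sublist v (map hfix [0..<N])"
      using that(1) by (simp only: hpow)
    then obtain i where "v = map hfix [i..<i + length v]"
      using sublist_map_upt by blast
    moreover have "length v = p" "q < p"
      using that(2) by (simp_all add: is_power_def)
    ultimately have "is_power (map hfix [i..<i + p]) p q"
      using that(2) by simp
    moreover have "length v \<le> N"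
      using sublist_length_le[OF that(1)] by (simp add: hpow)
    ultimately show ?thesis
      using hfix_power_bound \<open>length v = p\<close> \<open>q < p\<close> by simp
  qed
  have "S \<subseteq> (\<lambda>(p, q). real p / real q) ` ({..N} \<times> {..N})"
  proof
    fix x
    assume "x \<in> S"
    then obtain v p q where "x = real p / real q" "sublist v (hpow n)" "is_power v p q"
      unfolding S_def by blast
    with bound show "x \<in> (\<lambda>(p, q). real p / real q) ` ({..N} \<times> {..N})"
      by (auto intro!: image_eqI[of _ _ "(p, q)"])
  qed
  then have "finite S"
    by (rule finite_subset) simp
  moreover have "x \<le> 3 / 2" if "x \<in> S" for x
    using that bound unfolding S_def by blast
  moreover have "3 / 2 \<in> S"
  proof -
    have "11 \<le> N"
      using assms by (simp add: N_def self_le_power)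
    then have "[0..<N] = [0..<11] @ [11..<N]"
      using upt_add_eq_append[of 0 11 "N - 11"] by simp
    moreover have "map hfix [0..<11] = h_letter 0"
      using hpow_eq_map_hfix[of 1] by (simp add: hpow_def h_def)
    ultimately have "hpow n = [0] @ [1, 3, 1] @ [2, 0, 2, 1, 3, 1, 0] @ map hfix [11..<N]"
      by (simp add: hpow h_letter_0)
    then have "sublist [1, 3, 1] (hpow n)"
      by (metis append_assoc sublist_appendI)
    moreover have "is_power [1, 3, 1 :: nat] 3 2"
      by (simp add: is_power_def has_period_def less_Suc_eq numeral_eq_Suc)
    ultimately show ?thesis
      unfolding S_def by force
  qed
  ultimately have "Max S = 3 / 2"
    by (rule Max_eqI)
  then show ?thesis
    by (simp add: crit_exp_def S_def)
qed

theorem mainTheorem8: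
  shows "(\<forall>a \<in> {0,1,2,3::nat}. rev (h_letter a) = h_letter a)
       \<and> (\<forall>i p q. is_power (map h_omega [i..<i+p]) p q \<longrightarrow> real p / real q \<le> 3/2)
       \<and> (\<forall>n \<ge> 1. rev (hpow n) = hpow n \<and> length (hpow n) = 11 ^ n
                  \<and> crit_exp (hpow n) = 3/2)"
  using rev_h_letter hfix_power_bound rev_hpow length_hpow crit_exp_hpow
  by (simp add: h_omega_eq_hfix)

end
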